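(* Fix a realization $(\omega)$ for which $\frac1N\sum_{i=1}^NS(\omega_i)\to\int S\,d\mu<\infty$. Let $Q$ be an accumulation point of $(\mathcal L(\nu^{N,(\omega)}))_N$ in $\mathcal M_1(\mathbf D([0,T],(\mathcal M_1,v)))$ and let $\nu\sim Q$. For $t\in[0,T]$ let $\nu_{t,2}(A)=\nu_t(\mathbf S^1\times A)$, $A$ Borel in $\mathbb R$, be the second marginal of $\nu_t$. Then for all $t\in[0,T]$, $$\int_{\mathbb R}\sup_{x\in\mathbf S^1}|c(x,\pi)|\,\nu_{t,2}(d\pi)\le\int_{\mathbb R}\sup_{x\in\mathbf S^1}|c(x,\pi)|\,\mu(d\pi).$$
   Context: Standing setting (A). $T>0$ is fixed and $\mathbf S^1=\mathbb R/2\pi\mathbb Z$. The function $b:\mathbf S^1\times\mathbf S^1\times\mathbb R\to\mathbb R$ is bounded and Lipschitz continuous in its first two variables, uniformly in the third; $c:\mathbf S^1\times\mathbb R\to\mathbb R$ is Lipschitz continuous in its first variable, uniformly in the second (but possibly unbounded), and $S(\omega):=\sup_{x\in\mathbf S^1}|c(x,\omega)|$ is continuous in $\omega$. The disorder $(\omega)=(\omega_i)_{i\ge1}$ is a sequence of real random variables, each with law $\mu$. For a fixed realization $(\omega)$, under $\mathbf P$, $(B^i)_{i\ge1}$ are independent standard Brownian motions, $(\xi^i)$ are $\mathbf S^1$-valued initial conditions independent of the $B^i$, and $x^{i,N}$ is the ($\mathbf S^1$-projected) solution of $x^{i,N}_t=\xi^i+\frac1N\sum_{j=1}^N\int_0^t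 b(x^{i,N}_s,x^{j,N}_s,\omega_j)ds+\int_0^tc(x^{i,N}_s,\omega_i)ds+B^i_t$. The empirical measure is $\nu^{N,(\omega)}_t=\frac1N\sum_{i=1}^N\delta_{(x^{i,N}_t,\omega_i)}$. $(\mathcal M_1,v)$ denotes probability measures on $\mathbf S^1\times\mathbb R$ with the vague topology (tested against continuous compactly supported functions); $\mathbf D([0,T],X)$ is the Skorokhod space of càdlàg paths. *)

theory Defs
  imports "HOL-Probability.Probability"
begin

section \<open>The circle S^1 = R / 2 pi Z, represented by the fundamental domain [0, 2 pi)\<close>

definition circ_proj :: "real \<Rightarrow> real" where
  "circ_proj x = x - 2 * pi * real_of_int \<lfloor>x / (2 * pi)\<rfloor>"

definition periodic1 :: "(real \<Rightarrow> 'a) \<Rightarrow> bool" where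
  "periodic1 f \<longleftrightarrow> (\<forall>x. f (x + 2 * pi) = f x)"

text \<open>Probability measures on S^1 x R, as Borel probability measures on R x R
  concentrated on [0, 2 pi) x R.\<close>
definition M1 :: "(real \<times> real) measure set" where
  "M1 = {m. space m = UNIV \<and> sets m = sets borel \<and> prob_space m
            \<and> emeasure m ({0..<2 * pi} \<times> UNIV) = 1}"

text \<open>Continuous compactly supported test functions on S^1 x R, lifted to
  R x R (2 pi-periodic in the first variable).\<close>
definition Cc_test :: "(real \<times> real \<Rightarrow> real) set" where
  "Cc_test = {g. continuous_on UNIV g \<and> (\<forall>x p. g (x + 2 * pi, p) = g (x, p))
               \<and> (\<exists>R. \<forall>x p. \<bar>p\<bar> > R \<longrightarrow> g (x, p) = 0)}"

definition clampT :: "real \<Rightarrow> real \<Rightarrow> real" where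
  "clampT T t = min T (max 0 t)"

text \<open>Cadlag paths with values in (M1, vague topology); the vague topology is the
  initial topology of the maps m \<mapsto> \<integral> g dm, g \<in> Cc_test.\<close>
definition Dsp :: "real \<Rightarrow> (real \<Rightarrow> (real \<times> real) measure) set" where
  "Dsp T = {f. (\<forall>t. f t \<in> M1) \<and> (\<forall>t. f t = f (clampT T t))
     \<and> (\<forall>t\<in>{0..<T}. \<forall>g\<in>Cc_test.
           ((\<lambda>s. integral\<^sup>L (f s) g) \<longlongrightarrow> integral\<^sup>L (f t) g) (at_right t))
     \<and> (\<forall>t\<in>{0<..T}. \<exists>m\<in>M1. \<forall>g\<in>Cc_test.
           ((\<lambda>s. integral\<^sup>L (f s) g) \<longlongrightarrow> integral\<^sup>L m g) (at_left t))}"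

definition time_change :: "real \<Rightarrow> (real \<Rightarrow> real) \<Rightarrow> bool" where
  "time_change T l \<longleftrightarrow> strict_mono_on {0..T} l \<and> continuous_on {0..T} l
     \<and> l ` {0..T} = {0..T}"

definition skor_conv :: "real \<Rightarrow> (nat \<Rightarrow> real \<Rightarrow> (real \<times> real) measure)
    \<Rightarrow> (real \<Rightarrow> (real \<times> real) measure) \<Rightarrow> bool" where
  "skor_conv T fs f \<longleftrightarrow> (\<exists>l :: nat \<Rightarrow> real \<Rightarrow> real.
      (\<forall>n. time_change T (l n))
    \<and> (\<lambda>n. SUP t\<in>{0..T}. \<bar>l n t - t\<bar>) \<longlonglongrightarrow> 0
    \<and> (\<forall>g\<in>Cc_test. (\<lambda>n. SUP t\<in>{0..T}.
          \<bar>integral\<^sup>L (fs n (l n t)) g - integral\<^sup>L (f t) g\<bar>) \<longlonglongrightarrow> 0))"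

text \<open>Open sets of the (metrisable, hence sequential) Skorokhod topology.\<close>
definition skor_open :: "real \<Rightarrow> (real \<Rightarrow> (real \<times> real) measure) set \<Rightarrow> bool" where
  "skor_open T U \<longleftrightarrow> U \<subseteq> Dsp T \<and> (\<forall>f\<in>U. \<forall>fs. (\<forall>n. fs n \<in> Dsp T) \<and> skor_conv T fs f
       \<longrightarrow> (\<forall>\<^sub>F n in sequentially. fs n \<in> U))"

definition skor_borel :: "real \<Rightarrow> (real \<Rightarrow> (real \<times> real) measure) measure" where
  "skor_borel T = sigma (Dsp T) {U. skor_open T U}"

definition skor_Cb :: "real \<Rightarrow> ((real \<Rightarrow> (real \<times> real) measure) \<Rightarrow> real) set" where
  "skor_Cb T = {F. (\<exists>K. \<forall>f\<in>Dsp T. \<bar>F f\<bar> \<le> K)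
     \<and> (\<forall>fs f. (\<forall>n. fs n \<in> Dsp T) \<and> f \<in> Dsp T \<and> skor_conv T fs f
          \<longrightarrow> (\<lambda>n. F (fs n)) \<longlonglongrightarrow> F f)}"

definition skor_M1 :: "real \<Rightarrow> (real \<Rightarrow> (real \<times> real) measure) measure set" where
  "skor_M1 T = {Q. prob_space Q \<and> space Q = Dsp T \<and> sets Q = sets (skor_borel T)}"

definition skor_weak_conv :: "real \<Rightarrow> (nat \<Rightarrow> (real \<Rightarrow> (real \<times> real) measure) measure)
    \<Rightarrow> (real \<Rightarrow> (real \<times> real) measure) measure \<Rightarrow> bool" where
  "skor_weak_conv T Qs Q \<longleftrightarrow>
     (\<forall>F\<in>skor_Cb T. (\<lambda>n. integral\<^sup>L (Qs n) F) \<longlonglongrightarrow> integral\<^sup>L Q F)"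

definition (in prob_space) brownian_motion :: "('a \<Rightarrow> real \<Rightarrow> real) \<Rightarrow> bool" where
  "brownian_motion B \<longleftrightarrow>
     (\<forall>t. random_variable borel (\<lambda>w. B w t))
   \<and> (\<forall>w\<in>space M. B w 0 = 0 \<and> continuous_on UNIV (B w))
   \<and> (\<forall>s t. 0 \<le> s \<and> s < t \<longrightarrow>
        distributed M lborel (\<lambda>w. B w t - B w s)
          (\<lambda>x. ennreal (normal_density 0 (sqrt (t - s)) x)))
   \<and> (\<forall>(n::nat) ts. 0 \<le> ts 0 \<and> strict_mono_on {..n} ts \<longrightarrow>
        indep_vars (\<lambda>_. borel) (\<lambda>k w. B w (ts (Suc k)) - B w (ts k)) {..<n})"

definition supc :: "(real \<Rightarrow> real \<Rightarrow> real) \<Rightarrow> real \<Rightarrow> real" where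
  "supc c w = (SUP x\<in>{0..<2 * pi}. \<bar>c x w\<bar>)"

definition empirical :: "real \<Rightarrow> nat \<Rightarrow> (nat \<Rightarrow> 'o \<Rightarrow> real \<Rightarrow> real) \<Rightarrow> (nat \<Rightarrow> real)
    \<Rightarrow> 'o \<Rightarrow> real \<Rightarrow> (real \<times> real) measure" where
  "empirical T N X om w t = distr (uniform_measure (count_space UNIV) {..<N}) borel
      (\<lambda>i. (circ_proj (X i w (clampT T t)), om i))"

end

theory Submission
  imports Defs
begin

(* Write a for the integral of S = supc c against mu, and test the
   path nu of the limit process against the functionals
     excess g b nu = sup_{t in [0,T]} ramp b (integral of g against nu_t),
   where ramp b x = min 1 (max 0 (x - b)) and g ranges over the compactly supported
   continuous truncations (z -> trunc S n (snd z)) of S.  Each such functional is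
   bounded and continuous on the Skorokhod space.  Under the empirical measures the
   integral of g at any time is an average of truncated values S(omega_i), hence by
   the law of large numbers eventually below b whenever b > a; so the functional
   vanishes identically along the subsequence, its Q-integral is 0 by weak
   convergence, and it vanishes Q-almost surely.  Taking b = a + 1/(m+1) for all
   n, m (countably many conditions), every time marginal of a.e. path satisfies
   integral of trunc S n <= a for all n, and monotone convergence in n gives the
   claimed bound on the second marginal. *)

section \<open>Truncations of a nonnegative function\<close>

text \<open>Cut S at height n and, outside |p| \<le> n, linearly down to zero: a continuous,
  compactly supported, bounded approximation of S from below.\<close>
definition trunc :: "(real \<Rightarrow> real) \<Rightarrow> nat \<Rightarrow> real \<Rightarrow> real" where
  "trunc S n p = min (S p) (real n) * max 0 (min 1 (real n + 1 - \<bar>p\<bar>))"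

lemma trunc_bounds:
  assumes "\<And>p. 0 \<le> S p"
  shows "0 \<le> trunc S n p" "trunc S n p \<le> real n" "trunc S n p \<le> S p"
proof -
  have cut: "0 \<le> max 0 (min 1 (real n + 1 - \<bar>p\<bar>))" "max 0 (min 1 (real n + 1 - \<bar>p\<bar>)) \<le> 1"
    by auto
  have height: "0 \<le> min (S p) (real n)" using assms by auto
  show "0 \<le> trunc S n p" unfolding trunc_def using cut height by simp
  have "trunc S n p \<le> min (S p) (real n)"
    unfolding trunc_def using mult_left_mono[OF cut(2) height] by simp
  then show "trunc S n p \<le> real n" "trunc S n p \<le> S p" by auto
qed

lemma trunc_mono:
  assumes "\<And>p. 0 \<le> S p" and "n \<le> k"
  shows "trunc S n p \<le> trunc S k p"
  unfolding trunc_def using assms by (intro mult_mono) auto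

lemma trunc_SUP:
  assumes "\<And>p. 0 \<le> S p"
  shows "ennreal (S p) = (SUP n. ennreal (trunc S n p))"
proof (rule antisym)
  obtain n where n: "max (S p) \<bar>p\<bar> \<le> real n" using real_arch_simple by blast
  then have "trunc S n p = S p" by (auto simp: trunc_def)
  then show "ennreal (S p) \<le> (SUP n. ennreal (trunc S n p))"
    by (metis SUP_upper UNIV_I)
  show "(SUP n. ennreal (trunc S n p)) \<le> ennreal (S p)"
    using trunc_bounds(3)[OF assms] by (intro SUP_least ennreal_leI) auto
qed

lemma trunc_continuous:
  assumes "continuous_on UNIV S"
  shows "continuous_on UNIV (trunc S n)"
  unfolding trunc_def by (intro continuous_intros continuous_on_subset[OF assms]) auto

lemma trunc_Cc_test:
  assumes "continuous_on UNIV S"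
  shows "(\<lambda>z. trunc S n (snd z)) \<in> Cc_test"
proof -
  have "continuous_on UNIV (\<lambda>z::real \<times> real. trunc S n (snd z))"
    by (rule continuous_on_compose2[OF trunc_continuous[OF assms]]) (auto intro: continuous_intros)
  moreover have "\<bar>p\<bar> > real n + 1 \<Longrightarrow> trunc S n p = 0" for p by (auto simp: trunc_def)
  ultimately show ?thesis unfolding Cc_test_def by (auto intro!: exI[where x="real n + 1"])
qed

lemma snd_borel_measurable:
  "snd \<in> borel_measurable (borel :: ('a::topological_space \<times> 'b::topological_space) measure)"
  by (intro borel_measurable_continuous_onI continuous_intros)

lemma snd_marginal_bound:
  fixes m :: "('a::topological_space \<times> real) measure"
  assumes S: "continuous_on UNIV S" "\<And>p. 0 \<le> S p"
    and m: "prob_space m" "sets m = sets borel"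
    and bound: "\<And>n. integral\<^sup>L m (\<lambda>z. trunc S n (snd z)) \<le> a"
  shows "(\<integral>\<^sup>+ p. ennreal (S p) \<partial>distr m borel snd) \<le> ennreal a"
proof -
  interpret m: prob_space m by (fact m(1))
  have snd_meas: "snd \<in> measurable m borel"
    by (subst measurable_cong_sets[OF m(2) refl]) (rule snd_borel_measurable)
  let ?D = "distr m borel snd"
  interpret D: prob_space ?D by (rule m.prob_space_distr[OF snd_meas])
  have trunc_meas: "trunc S n \<in> borel_measurable borel" for n
    by (rule borel_measurable_continuous_onI[OF trunc_continuous[OF S(1)]])
  have each: "(\<integral>\<^sup>+ p. ennreal (trunc S n p) \<partial>?D) \<le> ennreal a" for n
  proof -
    have "integrable ?D (trunc S n)"
      by (rule D.integrable_const_bound[where B="real n"]) (use trunc_bounds[OF S(2)] trunc_meas in auto)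
    then have "(\<integral>\<^sup>+ p. ennreal (trunc S n p) \<partial>?D) = ennreal (integral\<^sup>L ?D (trunc S n))"
      by (rule nn_integral_eq_integral) (use trunc_bounds[OF S(2)] in auto)
    also have "integral\<^sup>L ?D (trunc S n) = integral\<^sup>L m (\<lambda>z. trunc S n (snd z))"
      by (rule integral_distr[OF snd_meas trunc_meas])
    finally show ?thesis using bound by (simp add: ennreal_leI)
  qed
  have "incseq (\<lambda>n p. ennreal (trunc S n p))"
    by (auto simp: incseq_def le_fun_def intro!: ennreal_leI trunc_mono[OF S(2)])
  then have "(\<integral>\<^sup>+ p. (SUP n. ennreal (trunc S n p)) \<partial>?D) = (SUP n. \<integral>\<^sup>+ p. ennreal (trunc S n p) \<partial>?D)"
    by (rule nn_integral_monotone_convergence_SUP) (use trunc_meas in auto)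
  then have "(\<integral>\<^sup>+ p. ennreal (S p) \<partial>?D) = (SUP n. \<integral>\<^sup>+ p. ennreal (trunc S n p) \<partial>?D)"
    by (simp add: trunc_SUP[OF S(2), symmetric])
  also have "\<dots> \<le> ennreal a" by (rule SUP_least) (rule each)
  finally show ?thesis .
qed

section \<open>Integrals against empirical measures\<close>

lemma uniform_count_integral:
  fixes f :: "nat \<Rightarrow> real"
  assumes N: "N \<ge> 1" and nonneg: "\<And>i. f i \<ge> 0"
  shows "integral\<^sup>L (uniform_measure (count_space UNIV) {..<N}) f = (\<Sum>i<N. f i) / real N"
proof -
  let ?U = "uniform_measure (count_space UNIV) {..<N}"
  have "integral\<^sup>L ?U f = enn2real (\<integral>\<^sup>+ x. ennreal (f x) \<partial>?U)"
    by (subst integral_eq_nn_integral) (auto simp: nonneg)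
  also have "(\<integral>\<^sup>+ x. ennreal (f x) \<partial>?U)
     = (\<integral>\<^sup>+ x. ennreal (f x) * indicator {..<N} x \<partial>count_space UNIV) / emeasure (count_space UNIV) {..<N}"
    by (subst nn_integral_uniform_measure) auto
  also have "(\<integral>\<^sup>+ x. ennreal (f x) * indicator {..<N} x \<partial>count_space UNIV) = ennreal (\<Sum>i<N. f i)"
    by (subst nn_integral_count_space_indicator[symmetric])
       (auto simp: nn_integral_count_space_finite nonneg sum_nonneg)
  also have "emeasure (count_space UNIV) {..<N} = ennreal (real N)"
    by (simp add: ennreal_of_nat_eq_real_of_nat)
  finally show ?thesis using N by (simp add: divide_ennreal sum_nonneg nonneg)
qed

lemma empirical_integral_snd:
  assumes N: "N \<ge> 1" and h: "h \<in> borel_measurable borel" "\<And>p. 0 \<le> h p"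
  shows "integral\<^sup>L (empirical T N Xn om w t) (\<lambda>z. h (snd z)) = (\<Sum>i<N. h (om i)) / real N"
proof -
  have "integral\<^sup>L (empirical T N Xn om w t) (\<lambda>z. h (snd z))
     = integral\<^sup>L (uniform_measure (count_space UNIV) {..<N}) (\<lambda>i. h (om i))"
    unfolding empirical_def using h(1)
    by (subst integral_distr)
       (auto simp: measurable_cong_sets[OF sets_uniform_measure refl]
             intro: measurable_compose[OF snd_borel_measurable])
  also have "\<dots> = (\<Sum>i<N. h (om i)) / real N"
    by (rule uniform_count_integral[OF N h(2)])
  finally show ?thesis .
qed

lemma empirical_trunc_moment_eventually:
  assumes S: "continuous_on UNIV S" "\<And>p. 0 \<le> S p"
    and lln: "(\<lambda>N. (\<Sum>i<N. S (om i)) / real N) \<longlonglongrightarrow> a" and "a < b"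
  shows "\<forall>\<^sub>F N in sequentially. \<forall>Xn w t.
           integral\<^sup>L (empirical T N Xn om w t) (\<lambda>z. trunc S n (snd z)) \<le> b"
proof -
  have "\<forall>\<^sub>F N in sequentially. N \<ge> 1 \<and> (\<Sum>i<N. S (om i)) / real N < b"
    by (rule eventually_conj[OF eventually_ge_at_top order_tendstoD(2)[OF lln \<open>a < b\<close>]])
  then show ?thesis
  proof eventually_elim
    case (elim N)
    have meas: "trunc S n \<in> borel_measurable borel"
      by (rule borel_measurable_continuous_onI[OF trunc_continuous[OF S(1)]])
    show ?case
    proof (intro allI)
      fix Xn w t
      have "integral\<^sup>L (empirical T N Xn om w t) (\<lambda>z. trunc S n (snd z))
          = (\<Sum>i<N. trunc S n (om i)) / real N"
        using elim meas trunc_bounds(1)[OF S(2)] by (intro empirical_integral_snd) auto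
      also have "\<dots> \<le> (\<Sum>i<N. S (om i)) / real N"
        by (intro divide_right_mono sum_mono trunc_bounds(3)[OF S(2)]) auto
      finally show "integral\<^sup>L (empirical T N Xn om w t) (\<lambda>z. trunc S n (snd z)) \<le> b"
        using elim by linarith
    qed
  qed
qed

section \<open>Functionals on the Skorokhod space\<close>

lemma skor_borel_space: "space (skor_borel T) = Dsp T"
  unfolding skor_borel_def by (rule space_measure_of) (auto simp: skor_open_def)

lemma skor_borel_sets: "sets (skor_borel T) = sigma_sets (Dsp T) {U. skor_open T U}"
  unfolding skor_borel_def by (rule sets_measure_of) (auto simp: skor_open_def)

lemma skor_Cb_measurable:
  assumes "F \<in> skor_Cb T"
  shows "F \<in> borel_measurable (skor_borel T)"
proof (rule borel_measurableI)
  fix U :: "real set" assume U: "open U"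
  have "skor_open T (F -` U \<inter> Dsp T)"
    unfolding skor_open_def
  proof (intro conjI ballI allI impI)
    fix f fs assume f: "f \<in> F -` U \<inter> Dsp T" and fs: "(\<forall>n. fs n \<in> Dsp T) \<and> skor_conv T fs f"
    then have "(\<lambda>n. F (fs n)) \<longlonglongrightarrow> F f" using assms by (auto simp: skor_Cb_def)
    then have "\<forall>\<^sub>F n in sequentially. F (fs n) \<in> U"
      using U f by (auto dest: topological_tendstoD)
    then show "\<forall>\<^sub>F n in sequentially. fs n \<in> F -` U \<inter> Dsp T"
      using fs by (auto elim: eventually_mono)
  qed auto
  then show "F -` U \<inter> space (skor_borel T) \<in> sets (skor_borel T)"
    unfolding skor_borel_space skor_borel_sets by auto
qed

text \<open>The ramp 0 below b, rising with slope one to 1: a 1-Lipschitz, [0,1]-valued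
  indicator of exceeding level b.\<close>
definition ramp :: "real \<Rightarrow> real \<Rightarrow> real" where
  "ramp b x = min 1 (max 0 (x - b))"

lemma ramp_bounds: "0 \<le> ramp b x" "ramp b x \<le> 1"
  by (auto simp: ramp_def)

lemma ramp_lipschitz: "\<bar>ramp b x - ramp b y\<bar> \<le> \<bar>x - y\<bar>"
  by (auto simp: ramp_def)

definition excess :: "real \<Rightarrow> (real \<times> real \<Rightarrow> real) \<Rightarrow> real
    \<Rightarrow> (real \<Rightarrow> (real \<times> real) measure) \<Rightarrow> real" where
  "excess T g b f = (SUP t\<in>{0..T}. ramp b (integral\<^sup>L (f t) g))"

lemma ramp_image_bdd: "bdd_above ((\<lambda>t. ramp b (h t)) ` A)"
  using ramp_bounds by (auto intro!: bdd_aboveI[where M=1])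

lemma excess_upper:
  assumes "t \<in> {0..T}"
  shows "ramp b (integral\<^sup>L (f t) g) \<le> excess T g b f"
  unfolding excess_def by (rule cSUP_upper[OF assms ramp_image_bdd])

lemma excess_bounds:
  assumes "0 \<le> T"
  shows "0 \<le> excess T g b f" "excess T g b f \<le> 1"
proof -
  have "ramp b (integral\<^sup>L (f 0) g) \<le> excess T g b f" using assms by (intro excess_upper) auto
  then show "0 \<le> excess T g b f" using ramp_bounds(1) order_trans by blast
  show "excess T g b f \<le> 1"
    unfolding excess_def using assms ramp_bounds(2) by (intro cSUP_least) auto
qed

lemma excess_zero:
  assumes "0 \<le> T" and "\<And>t. t \<in> {0..T} \<Longrightarrow> integral\<^sup>L (f t) g \<le> b"
  shows "excess T g b f = 0"
proof -
  have "excess T g b f = (SUP t\<in>{0..T}. (0::real))"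
    unfolding excess_def using assms(2) by (intro SUP_cong) (auto simp: ramp_def)
  then show ?thesis using assms(1) by simp
qed

lemma SUP_diff_le:
  fixes u v :: "'a \<Rightarrow> real"
  assumes "A \<noteq> {}" "bdd_above (u ` A)" "bdd_above (v ` A)"
    and diff: "\<And>t. t \<in> A \<Longrightarrow> \<bar>u t - v t\<bar> \<le> d"
  shows "\<bar>(SUP t\<in>A. u t) - (SUP t\<in>A. v t)\<bar> \<le> d"
proof -
  have "(SUP t\<in>A. u t) \<le> (SUP t\<in>A. v t) + d"
  proof (rule cSUP_least[OF assms(1)])
    fix t assume t: "t \<in> A"
    show "u t \<le> (SUP t\<in>A. v t) + d" using cSUP_upper[OF t assms(3)] diff[OF t] by linarith
  qed
  moreover have "(SUP t\<in>A. v t) \<le> (SUP t\<in>A. u t) + d"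
  proof (rule cSUP_least[OF assms(1)])
    fix t assume t: "t \<in> A"
    show "v t \<le> (SUP t\<in>A. u t) + d" using cSUP_upper[OF t assms(2)] diff[OF t] by linarith
  qed
  ultimately show ?thesis by linarith
qed

text \<open>Along a Skorokhod-convergent sequence the time-changed integrals of g converge
  uniformly on [0,T]; as the supremum over [0,T] is invariant under time changes and
  the ramp is 1-Lipschitz, excess is continuous.\<close>
lemma excess_continuous:
  assumes T: "0 \<le> T" and g: "g \<in> Cc_test" "\<And>z. 0 \<le> g z \<and> g z \<le> K"
    and fs: "\<And>n. fs n \<in> Dsp T" and f: "f \<in> Dsp T" and conv: "skor_conv T fs f"
  shows "(\<lambda>n. excess T g b (fs n)) \<longlonglongrightarrow> excess T g b f"
proof -
  obtain l where l: "\<And>n. time_change T (l n)"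
    and uconv: "\<forall>g\<in>Cc_test. (\<lambda>n. SUP t\<in>{0..T}.
          \<bar>integral\<^sup>L (fs n (l n t)) g - integral\<^sup>L (f t) g\<bar>) \<longlonglongrightarrow> 0"
    using conv unfolding skor_conv_def by blast
  define d where "d n = (SUP t\<in>{0..T}. \<bar>integral\<^sup>L (fs n (l n t)) g - integral\<^sup>L (f t) g\<bar>)" for n
  have integral_bounds: "0 \<le> integral\<^sup>L m g \<and> integral\<^sup>L m g \<le> K" if "m \<in> M1" for m
  proof -
    interpret prob_space m using that by (simp add: M1_def)
    have "g \<in> borel_measurable borel"
      using g(1) by (auto simp: Cc_test_def intro: borel_measurable_continuous_onI)
    then have "g \<in> borel_measurable m"
      using that by (subst measurable_cong_sets[where M'=borel]) (auto simp: M1_def)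
    then have "integrable m g" using g(2) by (intro integrable_const_bound[where B=K]) auto
    then have "integral\<^sup>L m g \<le> K" using g(2) by (intro integral_le_const) auto
    then show ?thesis using g(2) by (simp add: integral_nonneg)
  qed
  have close: "\<bar>excess T g b (fs n) - excess T g b f\<bar> \<le> d n" for n
  proof -
    have onto: "l n ` {0..T} = {0..T}" using l[of n] by (simp add: time_change_def)
    have bdd: "bdd_above ((\<lambda>t. \<bar>integral\<^sup>L (fs n (l n t)) g - integral\<^sup>L (f t) g\<bar>) ` {0..T})"
    proof (rule bdd_aboveI2)
      fix t
      have "fs n (l n t) \<in> M1" "f t \<in> M1" using fs[of n] f by (auto simp: Dsp_def)
      then show "\<bar>integral\<^sup>L (fs n (l n t)) g - integral\<^sup>L (f t) g\<bar> \<le> 2 * K"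
        using integral_bounds by (smt (verit))
    qed
    have "excess T g b (fs n) = (SUP t\<in>{0..T}. ramp b (integral\<^sup>L (fs n (l n t)) g))"
      unfolding excess_def by (subst onto[symmetric]) (simp add: image_comp)
    moreover have "\<bar>(SUP t\<in>{0..T}. ramp b (integral\<^sup>L (fs n (l n t)) g))
         - (SUP t\<in>{0..T}. ramp b (integral\<^sup>L (f t) g))\<bar> \<le> d n"
      unfolding d_def using T
    proof (intro SUP_diff_le ramp_image_bdd)
      fix t assume "t \<in> {0..T}"
      then show "\<bar>ramp b (integral\<^sup>L (fs n (l n t)) g) - ramp b (integral\<^sup>L (f t) g)\<bar>
          \<le> (SUP t\<in>{0..T}. \<bar>integral\<^sup>L (fs n (l n t)) g - integral\<^sup>L (f t) g\<bar>)"
        using ramp_lipschitz cSUP_upper[OF _ bdd] order_trans by blast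
    qed auto
    ultimately show ?thesis by (simp add: excess_def)
  qed
  have "d \<longlonglongrightarrow> 0" using uconv g(1) unfolding d_def by blast
  then have "(\<lambda>n. excess T g b (fs n) - excess T g b f) \<longlonglongrightarrow> 0"
    by (rule Lim_null_comparison[rotated]) (use close in auto)
  then show ?thesis by (rule LIM_zero_cancel)
qed

lemma excess_skor_Cb:
  assumes "0 \<le> T" "g \<in> Cc_test" "\<And>z. 0 \<le> g z \<and> g z \<le> K"
  shows "excess T g b \<in> skor_Cb T"
  unfolding skor_Cb_def using excess_bounds[OF assms(1)] excess_continuous[OF assms]
  by (auto intro!: exI[where x=1])

section \<open>Weak limits of laws charging only zeros of a functional\<close>

text \<open>The image law of E charges only points where F vanishes when F vanishes on the
  range of E; no measurability of E is needed.\<close>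
lemma distr_integral_zero:
  assumes F: "F \<in> borel_measurable M" and zero: "\<And>w. w \<in> space P \<Longrightarrow> F (E w) = 0"
  shows "integral\<^sup>L (distr P M E) F = 0"
proof (rule integral_eq_zero_AE)
  let ?N = "F -` (- {0}) \<inter> space M"
  have "E -` ?N \<inter> space P = {}" using zero by auto
  then have "emeasure (distr P M E) ?N = 0"
    unfolding distr_def emeasure_measure_of_conv by simp
  moreover have "?N \<in> sets M" using F by measurable
  ultimately show "AE x in distr P M E. F x = 0"
    by (intro AE_I'[where N="?N"]) (auto simp: null_sets_def)
qed

lemma weak_limit_vanishes:
  assumes Q: "Q \<in> skor_M1 T" and conv: "skor_weak_conv T (\<lambda>k. distr P (skor_borel T) (E k)) Q"
    and F: "F \<in> skor_Cb T" and nonneg: "\<And>f. f \<in> Dsp T \<Longrightarrow> 0 \<le> F f"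
    and zero: "\<forall>\<^sub>F k in sequentially. \<forall>w\<in>space P. F (E k w) = 0"
  shows "AE \<nu> in Q. F \<nu> = 0"
proof -
  interpret Q: prob_space Q using Q by (simp add: skor_M1_def)
  have space_Q: "space Q = Dsp T" using Q by (simp add: skor_M1_def)
  have sets_Q: "sets Q = sets (skor_borel T)" using Q by (simp add: skor_M1_def)
  have meas: "F \<in> borel_measurable Q"
    by (subst measurable_cong_sets[OF sets_Q refl]) (rule skor_Cb_measurable[OF F])
  obtain K where K: "\<And>f. f \<in> Dsp T \<Longrightarrow> \<bar>F f\<bar> \<le> K" using F unfolding skor_Cb_def by blast
  have lim: "(\<lambda>k. integral\<^sup>L (distr P (skor_borel T) (E k)) F) \<longlonglongrightarrow> integral\<^sup>L Q F"
    using conv F by (simp add: skor_weak_conv_def)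
  have "\<forall>\<^sub>F k in sequentially. integral\<^sup>L (distr P (skor_borel T) (E k)) F = 0"
    using zero by (rule eventually_mono) (intro distr_integral_zero[OF skor_Cb_measurable[OF F]], blast)
  then have "(\<lambda>k. integral\<^sup>L (distr P (skor_borel T) (E k)) F) \<longlonglongrightarrow> 0"
    by (rule tendsto_eventually)
  then have "integral\<^sup>L Q F = 0" by (rule LIMSEQ_unique[OF lim])
  moreover have "integrable Q F"
    using K meas space_Q by (intro Q.integrable_const_bound[where B=K]) auto
  moreover have "AE \<nu> in Q. 0 \<le> F \<nu>" using nonneg space_Q by (intro AE_I2) simp
  ultimately show ?thesis using integral_nonneg_eq_0_iff_AE by blast
qed

text \<open>S = supc c is nonnegative, because the Lipschitz hypothesis makes the supremum
  defining it one of a bounded set.\<close>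
lemma supc_nonneg:
  assumes "\<exists>L. \<forall>x x' w. \<bar>c x w - c x' w\<bar> \<le> L * \<bar>x - x'\<bar>"
  shows "0 \<le> supc c w"
proof -
  obtain L where L: "\<And>x x'. \<bar>c x w - c x' w\<bar> \<le> L * \<bar>x - x'\<bar>" using assms by blast
  have "bdd_above ((\<lambda>x. \<bar>c x w\<bar>) ` {0..<2*pi})"
  proof (rule bdd_aboveI2)
    fix x :: real assume x: "x \<in> {0..<2*pi}"
    have "L * \<bar>x - 0\<bar> \<le> \<bar>L\<bar> * \<bar>x\<bar>" by (simp add: mult_right_mono)
    also have "\<dots> \<le> \<bar>L\<bar> * (2*pi)" using x by (intro mult_left_mono) auto
    finally show "\<bar>c x w\<bar> \<le> \<bar>c 0 w\<bar> + \<bar>L\<bar> * (2*pi)" using L[of x 0] by linarith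
  qed
  then have "\<bar>c 0 w\<bar> \<le> supc c w" unfolding supc_def by (rule cSUP_upper[rotated]) auto
  then show ?thesis by linarith
qed

lemma moment_bound_of_excess_zero:
  assumes T: "0 \<le> T" and S: "continuous_on UNIV S" "\<And>p. 0 \<le> S p"
    and path: "\<And>t. \<nu> t \<in> M1"
    and zero: "\<And>n m. excess T (\<lambda>z. trunc S n (snd z)) (a + 1 / real (Suc m)) \<nu> = 0"
    and t: "t \<in> {0..T}"
  shows "(\<integral>\<^sup>+ p. ennreal (S p) \<partial>distr (\<nu> t) borel snd) \<le> ennreal a"
proof (rule snd_marginal_bound[OF S])
  show "prob_space (\<nu> t)" "sets (\<nu> t) = sets borel" using path[of t] by (auto simp: M1_def)
  fix n
  show "integral\<^sup>L (\<nu> t) (\<lambda>z. trunc S n (snd z)) \<le> a"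
  proof (rule field_le_epsilon)
    fix e :: real assume "0 < e"
    then obtain m where m: "1 / real (Suc m) < e" by (rule nat_approx_posE)
    have "ramp (a + 1 / real (Suc m)) (integral\<^sup>L (\<nu> t) (\<lambda>z. trunc S n (snd z))) \<le> 0"
      using excess_upper[OF t] zero by metis
    then show "integral\<^sup>L (\<nu> t) (\<lambda>z. trunc S n (snd z)) \<le> a + e"
      using m by (auto simp: ramp_def)
  qed
qed

theorem mainTheorem6:
  fixes T :: real
    and b :: "real \<Rightarrow> real \<Rightarrow> real \<Rightarrow> real"
    and c :: "real \<Rightarrow> real \<Rightarrow> real"
    and \<mu> :: "real measure"
    and om :: "nat \<Rightarrow> real"
    and P :: "'o measure"
    and B :: "nat \<Rightarrow> 'o \<Rightarrow> real \<Rightarrow> real"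
    and xi :: "nat \<Rightarrow> 'o \<Rightarrow> real"
    and X :: "nat \<Rightarrow> nat \<Rightarrow> 'o \<Rightarrow> real \<Rightarrow> real"
    and Q :: "(real \<Rightarrow> (real \<times> real) measure) measure"
  assumes T_pos: "T > 0"
    and b_per: "\<forall>y w. periodic1 (\<lambda>x. b x y w)" "\<forall>x w. periodic1 (\<lambda>y. b x y w)"
    and b_bdd: "\<exists>K. \<forall>x y w. \<bar>b x y w\<bar> \<le> K"
    and b_lip: "\<exists>L. \<forall>x x' y y' w. \<bar>b x y w - b x' y' w\<bar> \<le> L * (\<bar>x - x'\<bar> + \<bar>y - y'\<bar>)"
    and c_per: "\<forall>w. periodic1 (\<lambda>x. c x w)"
    and c_lip: "\<exists>L. \<forall>x x' w. \<bar>c x w - c x' w\<bar> \<le> L * \<bar>x - x'\<bar>"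
    and S_cont: "continuous_on UNIV (supc c)"
    and mu: "prob_space \<mu>" "sets \<mu> = sets borel"
    and S_int: "integrable \<mu> (supc c)"
    and S_lln: "(\<lambda>N. (\<Sum>i<N. supc c (om i)) / real N) \<longlonglongrightarrow> (\<integral>p. supc c p \<partial>\<mu>)"
    and P: "prob_space P"
    and BM: "\<forall>i. prob_space.brownian_motion P (B i)"
    and B_indep: "prob_space.indep_vars P (\<lambda>_. Pi\<^sub>M UNIV (\<lambda>_. borel)) B UNIV"
    and xi_rv: "\<forall>i. xi i \<in> borel_measurable P"
    and xi_indep: "prob_space.indep_var P (Pi\<^sub>M UNIV (\<lambda>_. Pi\<^sub>M UNIV (\<lambda>_. borel)))
                      (\<lambda>w i (_::real). xi i w)
                      (Pi\<^sub>M UNIV (\<lambda>_. Pi\<^sub>M UNIV (\<lambda>_. borel))) (\<lambda>w i. B i w)"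
    and X_cont: "\<forall>N i w. N \<ge> 1 \<and> i < N \<and> w \<in> space P \<longrightarrow> continuous_on {0..T} (X N i w)"
    and X_eq: "\<forall>N i w t. N \<ge> 1 \<and> i < N \<and> w \<in> space P \<and> t \<in> {0..T} \<longrightarrow>
        X N i w t = xi i w
          + integral {0..t} (\<lambda>s. (\<Sum>j<N. b (X N i w s) (X N j w s) (om j)) / real N
                                 + c (X N i w s) (om i))
          + B i w t"
    and Q_M1: "Q \<in> skor_M1 T"
    and Q_acc: "\<exists>r. strict_mono r \<and> skor_weak_conv T
        (\<lambda>k. distr P (skor_borel T) (\<lambda>w. empirical T (r k) (X (r k)) om w)) Q"
  shows "AE \<nu> in Q. \<forall>t\<in>{0..T}.
           (\<integral>\<^sup>+ p. ennreal (supc c p) \<partial>(distr (\<nu> t) borel snd))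
             \<le> (\<integral>\<^sup>+ p. ennreal (supc c p) \<partial>\<mu>)"
proof -
  define a where "a = (\<integral>p. supc c p \<partial>\<mu>)"
  have S_nonneg: "\<And>p. 0 \<le> supc c p" using supc_nonneg[OF c_lip] .
  have T_nonneg: "0 \<le> T" using T_pos by simp
  define F where "F n m = excess T (\<lambda>z. trunc (supc c) n (snd z)) (a + 1 / real (Suc m))" for n m
  obtain r where r: "strict_mono r"
    and conv: "skor_weak_conv T (\<lambda>k. distr P (skor_borel T) (\<lambda>w. empirical T (r k) (X (r k)) om w)) Q"
    using Q_acc by blast
  have "AE \<nu> in Q. F n m \<nu> = 0" for n m
  proof (rule weak_limit_vanishes[OF Q_M1 conv])
    show "F n m \<in> skor_Cb T" unfolding F_def using T_nonneg S_cont trunc_bounds[OF S_nonneg]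
      by (intro excess_skor_Cb[where K="real n"] trunc_Cc_test) auto
    show "0 \<le> F n m f" for f unfolding F_def using T_nonneg by (rule excess_bounds)
    have "\<forall>\<^sub>F N in sequentially. \<forall>(Xn :: nat \<Rightarrow> 'o \<Rightarrow> real \<Rightarrow> real) w t.
        integral\<^sup>L (empirical T N Xn om w t) (\<lambda>z. trunc (supc c) n (snd z)) \<le> a + 1 / real (Suc m)"
      using S_cont S_nonneg S_lln unfolding a_def by (intro empirical_trunc_moment_eventually) auto
    from eventually_compose_filterlim[OF this filterlim_subseq[OF r]]
    show "\<forall>\<^sub>F k in sequentially. \<forall>w\<in>space P. F n m (empirical T (r k) (X (r k)) om w) = 0"
      unfolding F_def by (rule eventually_mono) (simp add: excess_zero T_nonneg)
  qed
  then have "AE \<nu> in Q. \<forall>n m. F n m \<nu> = 0" by (simp add: AE_all_countable)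
  moreover have "AE \<nu> in Q. \<forall>t. \<nu> t \<in> M1"
    using Q_M1 by (intro AE_I2) (simp add: skor_M1_def Dsp_def)
  ultimately show ?thesis
  proof eventually_elim
    case (elim \<nu>)
    have "(\<integral>\<^sup>+ p. ennreal (supc c p) \<partial>\<mu>) = ennreal a"
      unfolding a_def using S_int S_nonneg by (intro nn_integral_eq_integral) auto
    then show ?case using elim T_nonneg S_cont S_nonneg unfolding F_def
      by (auto intro: moment_bound_of_excess_zero)
  qed
qed

end
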